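(* Let $\mathbb{X}$ be a discrete group with identity $\circ$ and let $\mu$ be a finitely supported probability measure on $\mathbb{X}$ satisfying (A1) $\mu(xzx^{-1})=\mu(z)$ for all $x,z\in\mathbb{X}$ and (A2) $\mu(z)=\mu(z^{-1})$ for all $z\in\mathbb{X}$. Let $L$ be the operator on the algebra $\mathcal{A}$ of bounded functions $\mathbb{X}\to\mathbb{R}$ given by $(Lf)(x)=\sum_{z\in\mathbb{X}}\mu(z)(f(xz)-f(x))$. Then $L$ has non-negative Bakry–Émery curvature, i.e. $\Gamma_2(f)(x)\ge 0$ for all $f\in\mathcal{A}$ and all $x\in\mathbb{X}$.
   Context: The carré du champ operator is $\Gamma(f,g):=\frac12\left[L(fg)-fLg-gLf\right]$ and the iterated carré du champ operator is $\Gamma_2(f,g):=\frac12\left[L\Gamma(f,g)-\Gamma(f,Lg)-\Gamma(g,Lf)\right]$; write $\Gamma(f)=\Gamma(f,f)$, $\Gamma_2(f)=\Gamma_2(f,f)$. The Bakry–Émery curvature of $L$ is the largest $\kappa\in[-\infty,\infty)$ such that $\Gamma_2(f)\ge\kappa\,\Gamma(f)$ pointwise for all $f\in\mathcal{A}$. *)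

theory Defs
  imports "HOL-Analysis.Analysis"
begin

text \<open>The group is written additively via the (not necessarily commutative) type class
  group_add: the product xz is x + z, the inverse z^{-1} is - z, the identity is 0.
  A finitely supported probability measure is a function mu with mu z \<ge> 0,
  finite support and total mass 1.\<close>

definition supp_mu :: "('a \<Rightarrow> real) \<Rightarrow> 'a set" where
  "supp_mu mu = {z. mu z \<noteq> 0}"

definition fin_prob :: "('a \<Rightarrow> real) \<Rightarrow> bool" where
  "fin_prob mu \<longleftrightarrow> (\<forall>z. 0 \<le> mu z) \<and> finite (supp_mu mu) \<and> (\<Sum>z\<in>supp_mu mu. mu z) = 1"

definition Lop :: "('a::group_add \<Rightarrow> real) \<Rightarrow> ('a \<Rightarrow> real) \<Rightarrow> 'a \<Rightarrow> real" where
  "Lop mu f x = (\<Sum>z\<in>supp_mu mu. mu z * (f (x + z) - f x))"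

definition Gamma :: "('a::group_add \<Rightarrow> real) \<Rightarrow> ('a \<Rightarrow> real) \<Rightarrow> ('a \<Rightarrow> real) \<Rightarrow> 'a \<Rightarrow> real" where
  "Gamma mu f g x = (Lop mu (\<lambda>y. f y * g y) x - f x * Lop mu g x - g x * Lop mu f x) / 2"

definition Gamma2 :: "('a::group_add \<Rightarrow> real) \<Rightarrow> ('a \<Rightarrow> real) \<Rightarrow> ('a \<Rightarrow> real) \<Rightarrow> 'a \<Rightarrow> real" where
  "Gamma2 mu f g x = (Lop mu (Gamma mu f g) x - Gamma mu f (Lop mu g) x - Gamma mu g (Lop mu f) x) / 2"

end

theory Submission
  imports Defs
begin

text \<open>Conjugation invariance of \<open>mu\<close> lets one write \<open>L f (x z) = \<Sum>\<^sub>w mu w (f (x w z) - f (x z))\<close>,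
  i.e. the right translations by \<open>w\<close> and by \<open>z\<close> may be taken in either order. Expanding
  \<open>\<Gamma>\<^sub>2\<close> then gives the exact sum-of-squares formula
  \<open>\<Gamma>\<^sub>2(f)(x) = 1/4 \<Sum>\<^sub>w \<Sum>\<^sub>z mu w mu z (f (x w z) - f (x w) - f (x z) + f x)\<^sup>2\<close>,
  whose right-hand side is non-negative.\<close>

definition mixed_diff :: "('a::group_add \<Rightarrow> real) \<Rightarrow> 'a \<Rightarrow> 'a \<Rightarrow> 'a \<Rightarrow> real" where
  "mixed_diff f x w z = f (x + w + z) - f (x + w) - f (x + z) + f x"

lemma Gamma_eq_sum:
  "Gamma mu f g x = (\<Sum>z\<in>supp_mu mu. mu z * ((f (x + z) - f x) * (g (x + z) - g x))) / 2"
  unfolding Gamma_def Lop_def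
  by (simp add: sum_subtractf[symmetric] sum_distrib_left algebra_simps)

lemma Lop_Gamma_eq_sum:
  "Lop mu (Gamma mu f g) x = (\<Sum>w\<in>supp_mu mu. \<Sum>z\<in>supp_mu mu. mu w * mu z *
     ((f (x + w + z) - f (x + w)) * (g (x + w + z) - g (x + w))
      - (f (x + z) - f x) * (g (x + z) - g x))) / 2"
  unfolding Lop_def Gamma_eq_sum sum_divide_distrib
  by (simp add: sum_distrib_left sum_subtractf right_diff_distrib diff_divide_distrib mult.assoc)

lemma Lop_add_right_conj_invariant:
  fixes mu :: "'a::group_add \<Rightarrow> real"
  assumes conj: "\<forall>y z. mu (y + z + - y) = mu z"
  shows "Lop mu f (x + z) = (\<Sum>w\<in>supp_mu mu. mu w * (f (x + w + z) - f (x + z)))"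
  unfolding Lop_def
  using conj[rule_format, of "- z"] conj[rule_format, of z]
  by (intro sum.reindex_bij_witness[where i="\<lambda>w. - z + w + z" and j="\<lambda>w. z + w + - z"])
    (auto simp: add.assoc supp_mu_def)

lemma Lop_diff_eq_sum_mixed_diff:
  fixes mu :: "'a::group_add \<Rightarrow> real"
  assumes "\<forall>y z. mu (y + z + - y) = mu z"
  shows "Lop mu f (x + z) - Lop mu f x = (\<Sum>w\<in>supp_mu mu. mu w * mixed_diff f x w z)"
  unfolding Lop_add_right_conj_invariant[OF assms] mixed_diff_def
  by (simp add: Lop_def sum_subtractf[symmetric] algebra_simps)

lemma Gamma_Lop_eq_sum:
  fixes mu :: "'a::group_add \<Rightarrow> real"
  assumes "\<forall>y z. mu (y + z + - y) = mu z"
  shows "Gamma mu f (Lop mu g) x = (\<Sum>w\<in>supp_mu mu. \<Sum>z\<in>supp_mu mu. mu w * mu z *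
     ((f (x + z) - f x) * mixed_diff g x w z)) / 2"
  unfolding Gamma_eq_sum Lop_diff_eq_sum_mixed_diff[OF assms]
  by (subst sum.swap) (simp add: sum_distrib_left mult.assoc mult.left_commute)

lemma Gamma2_eq_sum_mixed_diff:
  fixes mu :: "'a::group_add \<Rightarrow> real"
  assumes "\<forall>y z. mu (y + z + - y) = mu z"
  shows "Gamma2 mu f g x = (\<Sum>w\<in>supp_mu mu. \<Sum>z\<in>supp_mu mu. mu w * mu z *
     (mixed_diff f x w z * mixed_diff g x w z)) / 4"
proof -
  have summand: "mixed_diff f x w z * mixed_diff g x w z
      = (f (x + w + z) - f (x + w)) * (g (x + w + z) - g (x + w))
        - (f (x + z) - f x) * (g (x + z) - g x)
        - (f (x + z) - f x) * mixed_diff g x w z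
        - (g (x + z) - g x) * mixed_diff f x w z" for w z
    by (simp add: mixed_diff_def algebra_simps)
  show ?thesis
    unfolding Gamma2_def Lop_Gamma_eq_sum Gamma_Lop_eq_sum[OF assms] summand
    by (simp add: right_diff_distrib sum_subtractf)
qed

text \<open>Only \<open>mu \<ge> 0\<close> and conjugation invariance (A1) are used.\<close>

theorem theorem2:
  fixes mu :: "'a::group_add \<Rightarrow> real" and f :: "'a \<Rightarrow> real" and x :: 'a
  assumes "fin_prob mu"
    and A1: "\<forall>y z. mu (y + z + - y) = mu z"
    and A2: "\<forall>z. mu z = mu (- z)"
    and "bounded (range f)"
  shows "Gamma2 mu f f x \<ge> 0"
proof -
  have "0 \<le> mu w * mu z * (mixed_diff f x w z * mixed_diff f x w z)" for w z
    using \<open>fin_prob mu\<close> by (simp add: fin_prob_def)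
  then show ?thesis
    unfolding Gamma2_eq_sum_mixed_diff[OF A1] by (simp add: sum_nonneg)
qed

end
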